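(* Let $n$ be a prime, let $\alpha$ be a primitive element of $\mathbb{F}_{2^n}$, and identify $\mathbb{F}_2^n$ with $\mathbb{F}_{2^n}$ as $\mathbb{F}_2$-vector spaces. Let $X=\{0,\alpha^{i_1},\dots,\alpha^{i_{2^k-1}}\}$ be a $k$-dimensional subspace with $|\Delta(X)|=(2^k-1)(2^k-2)$, where $\Delta(X)=\{i_r-i_s \bmod (2^n-1) : 1\le r,s\le 2^k-1,\ r\ne s\}$. Then the cyclic shifts $\alpha^jX$, $0\le j\le 2^n-2$, form $2^n-1$ distinct $k$-dimensional subspaces, and the $\frac{(2^k-1)(2^{k-1}-1)}{3}\cdot(2^n-1)$ two-dimensional subspaces contained in these $2^n-1$ subspaces (counted $\frac{(2^k-1)(2^{k-1}-1)}{3}$ per subspace) are all distinct.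
   Context: The exponents $i_r$ are taken in $\mathbb{Z}_{2^n-1}$. The cyclic shift map $\Phi_j$ sends $\alpha^i\mapsto\alpha^{i+j}$ and $0\mapsto 0$. A $k$-dimensional subspace over $\mathbb{F}_2$ contains exactly $\frac{(2^k-1)(2^{k-1}-1)}{3}$ two-dimensional subspaces. *)

theory Defs
  imports "HOL-Computational_Algebra.Primes"
begin

text \<open>An F_2-subspace of a field of characteristic 2: a set containing 0 and closed
  under addition (scalar multiplication by F_2 = {0,1} is automatic).\<close>
definition f2_subspace :: "'a::field set \<Rightarrow> bool" where
  "f2_subspace X \<longleftrightarrow> 0 \<in> X \<and> (\<forall>x\<in>X. \<forall>y\<in>X. x + y \<in> X)"

definition f2_subspace_dim :: "'a::field set \<Rightarrow> nat \<Rightarrow> bool" where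
  "f2_subspace_dim X k \<longleftrightarrow> f2_subspace X \<and> finite X \<and> card X = 2 ^ k"

definition primitive_element :: "'a::field \<Rightarrow> bool" where
  "primitive_element \<alpha> \<longleftrightarrow> \<alpha> \<noteq> 0 \<and> (\<forall>x. x \<noteq> 0 \<longrightarrow> (\<exists>i::nat. x = \<alpha> ^ i))"

definition dlog :: "'a::field \<Rightarrow> 'a \<Rightarrow> nat" where
  "dlog \<alpha> x = (LEAST i. \<alpha> ^ i = x)"

definition diff_set :: "'a::field \<Rightarrow> nat \<Rightarrow> 'a set \<Rightarrow> int set" where
  "diff_set \<alpha> N X = {(int (dlog \<alpha> y) - int (dlog \<alpha> z)) mod int N | y z.
      y \<in> X - {0} \<and> z \<in> X - {0} \<and> y \<noteq> z}"

definition cshift :: "'a::field \<Rightarrow> nat \<Rightarrow> 'a set \<Rightarrow> 'a set" where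
  "cshift \<alpha> j X = (\<lambda>x. \<alpha> ^ j * x) ` X"

definition two_subspaces :: "'a::field set \<Rightarrow> 'a set set" where
  "two_subspaces Y = {V. V \<subseteq> Y \<and> f2_subspace_dim V 2}"

end

theory Submission
  imports Defs
begin

text \<open>Since the differences \<open>dlog y - dlog z\<close> of distinct nonzero \<open>y, z \<in> X\<close> are pairwise
  distinct modulo \<open>2^n - 1\<close>, a scalar \<open>c \<noteq> 0, 1\<close> maps at most one nonzero point of \<open>X\<close> back
  into \<open>X\<close>: the pairs \<open>(c x, x)\<close> and \<open>(c y, y)\<close> would both have difference \<open>dlog c\<close>.
  Hence two shifts \<open>\<alpha>^j X\<close> and \<open>\<alpha>^j' X\<close> sharing two nonzero points, in particular sharing a
  plane, have \<open>j = j'\<close>. Each shift contains the same number of planes, found by double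
  counting ordered pairs of distinct nonzero vectors; the characteristic 2 this needs follows
  from Fermat's little theorem for \<open>-1\<close>, as there is an odd number \<open>2^n - 1\<close> of units.\<close>

definition off_diag :: "'a set \<Rightarrow> ('a \<times> 'a) set" where
  "off_diag A = {(y, z). y \<in> A \<and> z \<in> A \<and> y \<noteq> z}"

lemma card_off_diag:
  assumes "finite A"
  shows "card (off_diag A) = card A * (card A - 1)"
proof -
  have "off_diag A = A \<times> A - (\<lambda>x. (x, x)) ` A" by (auto simp: off_diag_def)
  moreover have "card (A \<times> A - (\<lambda>x. (x, x)) ` A) = card A * card A - card A"
    using assms by (subst card_Diff_subset) (auto simp: card_cartesian_product card_image inj_on_def)
  ultimately show ?thesis by (simp add: diff_mult_distrib2)
qed

lemma power_card_nonzero_eq_one: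
  fixes a :: "'a::{field,finite}"
  assumes "a \<noteq> 0"
  shows "a ^ card (UNIV - {0::'a}) = 1"
proof -
  let ?S = "UNIV - {0::'a}"
  have "bij_betw (\<lambda>x. a * x) ?S ?S"
  proof (rule bij_betwI')
    fix y assume "y \<in> ?S"
    then show "\<exists>x\<in>?S. y = a * x" using assms by (intro bexI[of _ "y / a"]) auto
  qed (use assms in auto)
  then have "(\<Prod>x\<in>?S. a * x) = (\<Prod>x\<in>?S. x)"
    using prod.reindex_bij_betw[of _ ?S ?S "\<lambda>x. x"] by simp
  then have "a ^ card ?S * (\<Prod>x\<in>?S. x) = (\<Prod>x\<in>?S. x)" by (simp add: prod.distrib)
  moreover have "(\<Prod>x\<in>?S. x) \<noteq> 0" by simp
  ultimately show ?thesis by simp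
qed

text \<open>Fermat's little theorem applied to \<open>-1\<close>: an odd number of units forces \<open>-1 = 1\<close>.\<close>
lemma add_self_eq_zero_if_odd_card:
  fixes x :: "'a::{field,finite}"
  assumes "odd (card (UNIV - {0::'a}))"
  shows "x + x = 0"
proof -
  have "(-1::'a) = 1"
    using power_card_nonzero_eq_one[of "-1::'a"] neg_one_odd_power[OF assms]
    by (metis neg_equal_0_iff_equal zero_neq_one)
  then have "(1::'a) + 1 = 0" by (metis add.right_inverse)
  then show ?thesis by (metis distrib_left mult_1_right mult_zero_right)
qed

lemma f2_subspace_dim_image_mult:
  fixes c :: "'a::field"
  assumes "c \<noteq> 0" "f2_subspace_dim X k"
  shows "f2_subspace_dim ((\<lambda>x. c * x) ` X) k"
proof -
  have "f2_subspace ((\<lambda>x. c * x) ` X)"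
    using assms(2) unfolding f2_subspace_dim_def f2_subspace_def
    by (force simp flip: distrib_left)
  moreover have "card ((\<lambda>x. c * x) ` X) = card X"
    using assms(1) by (intro card_image) (auto simp: inj_on_def)
  ultimately show ?thesis using assms(2) by (simp add: f2_subspace_dim_def)
qed

lemma f2_subspace_dim_span_two:
  fixes a b :: "'a::field"
  assumes char2: "\<And>x::'a. x + x = 0" and "a \<noteq> 0" "b \<noteq> 0" "a \<noteq> b"
  shows "f2_subspace_dim {0, a, b, a + b} 2"
proof -
  have cancel: "x + (x + y) = y" "(x + y) + y = x" for x y :: 'a
    by (simp_all only: add.assoc[symmetric] add.assoc char2 add_0_left add_0_right)
  have "a + b \<noteq> 0" using assms(4) cancel(1)[of a b] by (metis add_0_right)
  moreover have "a + b \<noteq> a" "a + b \<noteq> b" using assms(2,3) by auto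
  ultimately have "card {0, a, b, a + b} = 4" using assms(2-4) by auto
  moreover have "f2_subspace {0, a, b, a + b}"
  proof -
    have "a + (a + b) = b" "(a + b) + a = b" "b + (a + b) = a" "(a + b) + b = a" "b + a = a + b"
      using cancel[of a b] cancel[of b a] by (simp_all only: add.commute)
    then show ?thesis unfolding f2_subspace_def
      by (simp only: char2 ball_simps insert_iff simp_thms add_0_left add_0_right empty_iff)
  qed
  ultimately show ?thesis by (simp add: f2_subspace_dim_def)
qed

lemma f2_subspace_dim_two_eq_span:
  fixes V :: "'a::field set"
  assumes char2: "\<And>x::'a. x + x = 0" and V: "f2_subspace_dim V 2"
    and "a \<in> V - {0}" "b \<in> V - {0}" "a \<noteq> b"
  shows "V = {0, a, b, a + b}"
proof (rule card_subset_eq[symmetric])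
  show "finite V" "{0, a, b, a + b} \<subseteq> V"
    using V assms(3-5) by (auto simp: f2_subspace_dim_def f2_subspace_def)
  show "card {0, a, b, a + b} = card V"
    using f2_subspace_dim_span_two[OF char2, of a b] assms(3-5) V
    by (simp add: f2_subspace_dim_def)
qed

text \<open>Double counting of ordered pairs of distinct nonzero vectors: each spans exactly one
  plane, and each plane contains six of them.\<close>
lemma card_two_subspaces:
  fixes Y :: "'a::field set"
  assumes char2: "\<And>x::'a. x + x = 0" and "f2_subspace Y" "finite Y"
  shows "6 * card (two_subspaces Y) = card (Y - {0}) * (card (Y - {0}) - 1)"
proof -
  let ?T = "two_subspaces Y"
  let ?pairs = "\<lambda>V. off_diag (V - {0})"
  have finite_T: "finite ?T"
    using \<open>finite Y\<close> by (rule finite_subset[rotated, OF finite_Pow_iff[THEN iffD2]])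
      (auto simp: two_subspaces_def)
  have pairs_Y: "?pairs Y = (\<Union>V\<in>?T. ?pairs V)"
  proof
    show "?pairs Y \<subseteq> (\<Union>V\<in>?T. ?pairs V)"
    proof
      fix p assume "p \<in> ?pairs Y"
      then obtain a b where p: "p = (a, b)" "a \<in> Y - {0}" "b \<in> Y - {0}" "a \<noteq> b"
        by (auto simp: off_diag_def)
      then have "{0, a, b, a + b} \<in> ?T"
        using f2_subspace_dim_span_two[OF char2, of a b] \<open>f2_subspace Y\<close>
        by (auto simp: two_subspaces_def f2_subspace_def)
      moreover have "p \<in> ?pairs {0, a, b, a + b}" using p by (auto simp: off_diag_def)
      ultimately show "p \<in> (\<Union>V\<in>?T. ?pairs V)" by blast
    qed
  qed (auto simp: two_subspaces_def off_diag_def)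
  have disjoint: "?pairs V \<inter> ?pairs W = {}" if "V \<in> ?T" "W \<in> ?T" "V \<noteq> W" for V W
  proof (rule ccontr)
    assume "?pairs V \<inter> ?pairs W \<noteq> {}"
    then obtain a b where "a \<in> V - {0}" "b \<in> V - {0}" "a \<in> W - {0}" "b \<in> W - {0}" "a \<noteq> b"
      by (auto simp: off_diag_def)
    then have "V = {0, a, b, a + b}" "W = {0, a, b, a + b}"
      using f2_subspace_dim_two_eq_span[OF char2] that by (auto simp: two_subspaces_def)
    with \<open>V \<noteq> W\<close> show False by simp
  qed
  have card_pairs: "card (?pairs V) = 6" if "V \<in> ?T" for V
  proof -
    have "finite V" "card V = 4" "0 \<in> V"
      using that by (auto simp: two_subspaces_def f2_subspace_dim_def f2_subspace_def)
    then show ?thesis by (simp add: card_off_diag)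
  qed
  have "card (?pairs Y) = (\<Sum>V\<in>?T. card (?pairs V))"
    unfolding pairs_Y using finite_T disjoint card_pairs
    by (intro card_UN_disjoint) (auto intro: card_ge_0_finite)
  also have "\<dots> = 6 * card ?T" using card_pairs by simp
  finally show ?thesis using \<open>finite Y\<close> by (simp add: card_off_diag)
qed

lemma card_two_subspaces_dim:
  fixes Y :: "'a::field set"
  assumes char2: "\<And>x::'a. x + x = 0" and "f2_subspace_dim Y k" "k \<ge> 1"
  shows "card (two_subspaces Y) = (2 ^ k - 1) * (2 ^ (k - 1) - 1) div 3"
proof -
  have "card (Y - {0}) = 2 ^ k - 1"
    using assms(2) by (simp add: f2_subspace_dim_def f2_subspace_def)
  moreover have "(2::nat) ^ k - 1 - 1 = 2 * (2 ^ (k - 1) - 1)"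
    using \<open>k \<ge> 1\<close> by (cases k) (simp_all add: diff_mult_distrib2)
  ultimately have "6 * card (two_subspaces Y) = 2 * ((2 ^ k - 1) * (2 ^ (k - 1) - 1))"
    using card_two_subspaces[OF char2] assms(2) by (simp add: f2_subspace_dim_def)
  then show ?thesis by simp
qed

lemma diff_set_eq_image:
  "diff_set \<alpha> N X =
     (\<lambda>(y, z). (int (dlog \<alpha> y) - int (dlog \<alpha> z)) mod int N) ` off_diag (X - {0})"
  by (auto simp: diff_set_def off_diag_def)

context
  fixes \<alpha> :: "'a::{field,finite}" and N :: nat
  assumes N_def: "N = card (UNIV - {0::'a})" and primitive: "primitive_element \<alpha>"
begin

lemma primitive_nonzero: "\<alpha> \<noteq> 0"
  using primitive by (simp add: primitive_element_def)

lemma power_primitive_N: "\<alpha> ^ N = 1"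
  using power_card_nonzero_eq_one[OF primitive_nonzero] by (simp add: N_def)

lemma N_gt_0: "0 < N"
proof -
  have "(1::'a) \<in> UNIV - {0}" by simp
  then show ?thesis unfolding N_def by (metis card_gt_0_iff empty_iff finite)
qed

lemma power_primitive_mod: "\<alpha> ^ a = \<alpha> ^ (a mod N)"
proof -
  have "\<alpha> ^ a = (\<alpha> ^ N) ^ (a div N) * \<alpha> ^ (a mod N)"
    by (simp only: power_mult [symmetric] power_add [symmetric] mult_div_mod_eq)
  then show ?thesis by (simp add: power_primitive_N)
qed

lemma image_power_primitive: "(\<lambda>i. \<alpha> ^ i) ` {..<N} = UNIV - {0}"
proof
  show "UNIV - {0} \<subseteq> (\<lambda>i. \<alpha> ^ i) ` {..<N}"
  proof
    fix x :: 'a assume "x \<in> UNIV - {0}"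
    then obtain i where "x = \<alpha> ^ i" using primitive by (auto simp: primitive_element_def)
    then have "x = \<alpha> ^ (i mod N)" using power_primitive_mod[of i] by argo
    with N_gt_0 show "x \<in> (\<lambda>i. \<alpha> ^ i) ` {..<N}" by auto
  qed
qed (use primitive_nonzero in auto)

lemma inj_on_power_primitive: "inj_on (\<lambda>i. \<alpha> ^ i) {..<N}"
proof (rule eq_card_imp_inj_on)
  show "card ((\<lambda>i. \<alpha> ^ i) ` {..<N}) = card {..<N}"
    unfolding image_power_primitive by (simp add: N_def)
qed simp

lemma power_primitive_eq_iff: "\<alpha> ^ a = \<alpha> ^ b \<longleftrightarrow> a mod N = b mod N"
proof
  assume "\<alpha> ^ a = \<alpha> ^ b"
  then have "\<alpha> ^ (a mod N) = \<alpha> ^ (b mod N)"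
    using power_primitive_mod[of a] power_primitive_mod[of b] by argo
  then show "a mod N = b mod N"
    by (rule inj_onD[OF inj_on_power_primitive]) (simp_all add: N_gt_0)
next
  assume "a mod N = b mod N"
  then show "\<alpha> ^ a = \<alpha> ^ b"
    using power_primitive_mod[of a] power_primitive_mod[of b] by argo
qed

lemma power_dlog:
  assumes "x \<noteq> 0"
  shows "\<alpha> ^ dlog \<alpha> x = x"
proof -
  have "\<exists>i. \<alpha> ^ i = x" using primitive assms unfolding primitive_element_def by metis
  then show ?thesis unfolding dlog_def by (rule LeastI_ex)
qed

lemma dlog_mult_mod:
  assumes "x \<noteq> 0" "y \<noteq> 0"
  shows "int (dlog \<alpha> (x * y)) mod int N = (int (dlog \<alpha> x) + int (dlog \<alpha> y)) mod int N"
proof -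
  have "\<alpha> ^ dlog \<alpha> (x * y) = \<alpha> ^ (dlog \<alpha> x + dlog \<alpha> y)"
    using assms by (simp add: power_dlog power_add)
  then have "dlog \<alpha> (x * y) mod N = (dlog \<alpha> x + dlog \<alpha> y) mod N"
    by (simp only: power_primitive_eq_iff)
  then show ?thesis by (metis of_nat_add of_nat_mod)
qed

text \<open>A maximal difference set makes \<open>(y, z) \<mapsto> dlog y - dlog z\<close> injective on pairs, while
  \<open>(c x, x)\<close> and \<open>(c y, y)\<close> both have difference \<open>dlog c\<close>.\<close>
lemma eq_one_if_mult_maps_two_points:
  assumes "finite X"
    and card_diff: "card (diff_set \<alpha> N X) = card (X - {0}) * (card (X - {0}) - 1)"
    and x: "x \<in> X - {0}" and y: "y \<in> X - {0}" and "x \<noteq> y"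
    and "c \<noteq> 0" "c * x \<in> X" "c * y \<in> X"
  shows "c = 1"
proof (rule ccontr)
  assume "c \<noteq> 1"
  define g where "g = (\<lambda>(y, z). (int (dlog \<alpha> y) - int (dlog \<alpha> z)) mod int N)"
  have inj: "inj_on g (off_diag (X - {0}))"
    using card_diff \<open>finite X\<close>
    by (intro eq_card_imp_inj_on) (simp_all add: diff_set_eq_image g_def card_off_diag)
  have mem: "(c * z, z) \<in> off_diag (X - {0})" if "z \<in> X - {0}" "c * z \<in> X" for z
    using that \<open>c \<noteq> 0\<close> \<open>c \<noteq> 1\<close> by (auto simp: off_diag_def)
  have shift: "g (c * z, z) = int (dlog \<alpha> c) mod int N" if "z \<noteq> 0" for z
  proof -
    let ?z = "int (dlog \<alpha> z)"
    have "g (c * z, z) = (int (dlog \<alpha> (c * z)) mod int N - ?z) mod int N"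
      by (simp add: g_def mod_diff_left_eq)
    also have "\<dots> = ((int (dlog \<alpha> c) + ?z) mod int N - ?z) mod int N"
      by (simp only: dlog_mult_mod[OF \<open>c \<noteq> 0\<close> that])
    also have "\<dots> = int (dlog \<alpha> c) mod int N" by (simp add: mod_diff_left_eq)
    finally show ?thesis .
  qed
  have "(c * x, x) = (c * y, y)"
  proof (rule inj_onD[OF inj])
    show "g (c * x, x) = g (c * y, y)" using shift x y by simp
  qed (use mem x y \<open>c * x \<in> X\<close> \<open>c * y \<in> X\<close> in auto)
  with \<open>x \<noteq> y\<close> show False by simp
qed

lemma mem_cshift_iff: "u \<in> cshift \<alpha> j X \<longleftrightarrow> u / \<alpha> ^ j \<in> X"
  using primitive_nonzero unfolding cshift_def
  by (auto simp: image_iff intro: bexI[of _ "u / \<alpha> ^ j"])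

lemma cshift_indices_eq_if_common_points:
  assumes "finite X"
    and card_diff: "card (diff_set \<alpha> N X) = card (X - {0}) * (card (X - {0}) - 1)"
    and "j < N" "j' < N"
    and "u \<in> cshift \<alpha> j X" "u \<in> cshift \<alpha> j' X" "v \<in> cshift \<alpha> j X" "v \<in> cshift \<alpha> j' X"
    and "u \<noteq> 0" "v \<noteq> 0" "u \<noteq> v"
  shows "j = j'"
proof -
  let ?c = "\<alpha> ^ j' / \<alpha> ^ j"
  have "?c * (z / \<alpha> ^ j') = z / \<alpha> ^ j" for z
    using primitive_nonzero by (simp add: field_simps)
  then have "?c = 1"
    using assms primitive_nonzero unfolding mem_cshift_iff
    by (intro eq_one_if_mult_maps_two_points[OF \<open>finite X\<close> card_diff,
          of "u / \<alpha> ^ j'" "v / \<alpha> ^ j'"]) auto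
  then have "\<alpha> ^ j = \<alpha> ^ j'" using primitive_nonzero by simp
  with \<open>j < N\<close> \<open>j' < N\<close> show ?thesis by (simp add: power_primitive_eq_iff)
qed

lemma two_subspaces_cshift_disjoint:
  assumes "finite X"
    and card_diff: "card (diff_set \<alpha> N X) = card (X - {0}) * (card (X - {0}) - 1)"
    and "j < N" "j' < N" "j \<noteq> j'"
  shows "two_subspaces (cshift \<alpha> j X) \<inter> two_subspaces (cshift \<alpha> j' X) = {}"
proof (rule ccontr)
  assume "two_subspaces (cshift \<alpha> j X) \<inter> two_subspaces (cshift \<alpha> j' X) \<noteq> {}"
  then obtain V where V: "V \<subseteq> cshift \<alpha> j X" "V \<subseteq> cshift \<alpha> j' X" "f2_subspace_dim V 2"
    by (auto simp: two_subspaces_def)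
  then have "card (V - {0}) = 3" by (simp add: f2_subspace_dim_def f2_subspace_def)
  then obtain u v w where "V - {0} = {u, v, w}" "u \<noteq> v" by (auto simp: card_3_iff)
  then have "j = j'"
    using cshift_indices_eq_if_common_points[OF \<open>finite X\<close> card_diff \<open>j < N\<close> \<open>j' < N\<close>, of u v]
      V(1,2) by blast
  with \<open>j \<noteq> j'\<close> show False ..
qed

lemma inj_on_cshift:
  assumes "finite X"
    and card_diff: "card (diff_set \<alpha> N X) = card (X - {0}) * (card (X - {0}) - 1)"
    and "card (X - {0}) > 0"
  shows "inj_on (\<lambda>j. cshift \<alpha> j X) {..<N}"
proof (rule inj_onI)
  fix j j' assume j: "j \<in> {..<N}" and j': "j' \<in> {..<N}"
    and eq: "cshift \<alpha> j X = cshift \<alpha> j' X"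
  obtain x where x: "x \<in> X - {0}" using assms(3) by (metis card_gt_0_iff ex_in_conv)
  have shifted: "\<alpha> ^ j * z \<in> cshift \<alpha> j' X" if "z \<in> X" for z
    using that eq by (auto simp: cshift_def)
  show "j = j'"
  proof (cases "X - {0} = {x}")
    case True
    have "\<alpha> ^ j * x / \<alpha> ^ j' \<in> X - {0}"
      using shifted x primitive_nonzero unfolding mem_cshift_iff by auto
    then have "\<alpha> ^ j * x / \<alpha> ^ j' = x" using True by blast
    then have "\<alpha> ^ j = \<alpha> ^ j'" using x primitive_nonzero by (simp add: field_simps)
    with j j' show ?thesis by (simp add: power_primitive_eq_iff)
  next
    case False
    then obtain y where y: "y \<in> X - {0}" "y \<noteq> x" using x by blast
    show ?thesis
      by (rule cshift_indices_eq_if_common_points[OF \<open>finite X\<close> card_diff,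
            of j j' "\<alpha> ^ j * x" "\<alpha> ^ j * y"])
        (use j j' x y shifted primitive_nonzero in \<open>auto simp: cshift_def\<close>)
  qed
qed

end

theorem lemma7:
  fixes \<alpha> :: "'a::{field,finite}" and X :: "'a set" and n k :: nat
  assumes "prime n"
    and "card (UNIV :: 'a set) = 2 ^ n"
    and "primitive_element \<alpha>"
    and "k \<ge> 1"
    and "f2_subspace_dim X k"
    and "card (diff_set \<alpha> (2 ^ n - 1) X) = (2 ^ k - 1) * (2 ^ k - 2)"
  shows "(\<forall>j < 2 ^ n - 1. f2_subspace_dim (cshift \<alpha> j X) k)
       \<and> inj_on (\<lambda>j. cshift \<alpha> j X) {..< 2 ^ n - 1}
       \<and> (\<forall>j < 2 ^ n - 1. \<forall>j' < 2 ^ n - 1. j \<noteq> j' \<longrightarrow>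
            two_subspaces (cshift \<alpha> j X) \<inter> two_subspaces (cshift \<alpha> j' X) = {})
       \<and> card (\<Union>j < 2 ^ n - 1. two_subspaces (cshift \<alpha> j X))
           = ((2 ^ k - 1) * (2 ^ (k - 1) - 1) div 3) * (2 ^ n - 1)"
proof -
  let ?N = "2 ^ n - 1 :: nat"
  have N_def: "?N = card (UNIV - {0::'a})" using assms(2) by (simp add: card_Diff_singleton)
  \<comment> \<open>Primality of \<open>n\<close> is only used through \<open>n > 0\<close>.\<close>
  have "odd ?N" using \<open>prime n\<close> by (simp add: prime_gt_0_nat)
  then have char2: "\<And>x::'a. x + x = 0"
    using add_self_eq_zero_if_odd_card N_def by metis
  have "finite X" and card_X: "card (X - {0}) = 2 ^ k - 1"
    using assms(5) by (auto simp: f2_subspace_dim_def f2_subspace_def)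
  have card_diff: "card (diff_set \<alpha> ?N X) = card (X - {0}) * (card (X - {0}) - 1)"
    using assms(6) card_X by (simp add: numeral_2_eq_2)
  have dims: "\<forall>j < ?N. f2_subspace_dim (cshift \<alpha> j X) k"
    using f2_subspace_dim_image_mult[OF _ assms(5)] primitive_nonzero[OF N_def assms(3)]
    by (simp add: cshift_def)
  have disjoint: "\<forall>j < ?N. \<forall>j' < ?N. j \<noteq> j' \<longrightarrow>
      two_subspaces (cshift \<alpha> j X) \<inter> two_subspaces (cshift \<alpha> j' X) = {}"
    using two_subspaces_cshift_disjoint[OF N_def assms(3) \<open>finite X\<close> card_diff] by blast
  have "1 < (2::nat) ^ k" using \<open>k \<ge> 1\<close> by (intro one_less_power) auto
  then have "0 < card (X - {0})" using card_X by simp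
  then have inj: "inj_on (\<lambda>j. cshift \<alpha> j X) {..< ?N}"
    by (rule inj_on_cshift[OF N_def assms(3) \<open>finite X\<close> card_diff])
  have "card (\<Union>j < ?N. two_subspaces (cshift \<alpha> j X))
      = (\<Sum>j < ?N. card (two_subspaces (cshift \<alpha> j X)))"
    using disjoint by (intro card_UN_disjoint) auto
  also have "\<dots> = ((2 ^ k - 1) * (2 ^ (k - 1) - 1) div 3) * ?N"
    using card_two_subspaces_dim[OF char2 _ \<open>k \<ge> 1\<close>] dims by simp
  finally show ?thesis using dims inj disjoint by blast
qed

end
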